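(* Let $r\in(0,1/2)$. For the repetition-coding distributed delay diversity scheme described in the context, there is a constant $C>0$, independent of $\mathrm{SNR}$, such that as $\mathrm{SNR}\to\infty$, $$\Pr[I_{R\text{-}TDA}<R,\ |\mathcal D(s)|=1]\sim C\,\widetilde{\mathrm{SNR}}^{-3(1-2r)}.$$
   Context: Network: a source $N_S$, two relays $N_{R_1},N_{R_2}$ and a destination $N_D$. The gains $\alpha_{i,j}$, $i\in\{S,R_1,R_2\}$, $j\in\{R_1,R_2,D\}$, $i\neq j$, are mutually independent zero-mean circularly symmetric complex Gaussian random variables with variances $\sigma^2_{i,j}>0$. For $\mathrm{SNR}>0$ set $\rho_0=\frac23\mathrm{SNR}$ and $\widetilde{\mathrm{SNR}}=\sigma^2_{S,D}\mathrm{SNR}$. The target rate is $R=r\log(1+\mathrm{SNR}\,\sigma^2_{S,D})$. Relay $R_k$ belongs to the decoding set $\mathcal D(s)$ iff $\frac12\log(1+\rho_0|\alpha_{S,R_k}|^2)\ge R$. Repetition-coding distributed delay diversity: successful relays retransmit the source's own codeword in phase 2, with bandwidth $B_w$ and delays $\tau_k$. Conditioned on $\mathcal D(s)$, $$I_{R\text{-}TDA}=\frac{1}{2B_w}\int_{-B_w/2}^{B_w/2}\log\left(1+\rho_0|\alpha_{S,D}|^2+\rho_0\Big|\sum_{R_k\in\mathcal D(s)}\alpha_{R_k,D}e^{j2\pi f\tau_k}\Big|^2\right)df.$$ In particular, if $\mathcal D(s)=\{R_j\}$ then $I_{R\text{-}TDA}=\frac12\log(1+\rho_0(|\alpha_{S,D}|^2+|\alpha_{R_j,D}|^2))$.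 The notation $f\sim g$ means $f/g\to1$ as $\mathrm{SNR}\to\infty$. *)

theory Defs
  imports "HOL-Probability.Probability" "HOL-Library.Landau_Symbols"
begin

datatype node = S | R1 | R2 | D

definition links :: "(node \<times> node) set" where
  "links = {(i,j). i \<in> {S,R1,R2} \<and> j \<in> {R1,R2,D} \<and> i \<noteq> j}"

text \<open>Density (w.r.t. Lebesgue measure on the complex plane) of a zero-mean
  circularly symmetric complex Gaussian with variance v.\<close>
definition cgauss_density :: "real \<Rightarrow> complex \<Rightarrow> real" where
  "cgauss_density v z = exp (- (cmod z)\<^sup>2 / v) / (pi * v)"

definition decoding_set :: "real \<Rightarrow> real \<Rightarrow> (node \<times> node \<Rightarrow> complex) \<Rightarrow> node set" where
  "decoding_set \<rho>0 Rt a = {k \<in> {R1, R2}. ln (1 + \<rho>0 * (cmod (a (S,k)))\<^sup>2) / 2 \<ge> Rt}"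

definition I_RTDA :: "real \<Rightarrow> (node \<Rightarrow> real) \<Rightarrow> real \<Rightarrow> (node \<times> node \<Rightarrow> complex) \<Rightarrow> node set \<Rightarrow> real" where
  "I_RTDA Bw \<tau> \<rho>0 a Ds =
     (1 / (2 * Bw)) * integral {-Bw/2..Bw/2}
       (\<lambda>f. ln (1 + \<rho>0 * (cmod (a (S,D)))\<^sup>2
                 + \<rho>0 * (cmod (\<Sum>k\<in>Ds. a (k,D) * cis (2 * pi * f * \<tau> k)))\<^sup>2))"

definition outage_one :: "'w measure \<Rightarrow> (node \<times> node \<Rightarrow> 'w \<Rightarrow> complex) \<Rightarrow> (node \<times> node \<Rightarrow> real)
     \<Rightarrow> real \<Rightarrow> (node \<Rightarrow> real) \<Rightarrow> real \<Rightarrow> real \<Rightarrow> real" where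
  "outage_one M \<alpha> \<sigma>2 Bw \<tau> r snr =
     (let \<rho>0 = 2/3 * snr; Rt = r * ln (1 + snr * \<sigma>2 (S,D)) in
      measure M {\<omega> \<in> space M.
        I_RTDA Bw \<tau> \<rho>0 (\<lambda>l. \<alpha> l \<omega>) (decoding_set \<rho>0 Rt (\<lambda>l. \<alpha> l \<omega>)) < Rt
        \<and> card (decoding_set \<rho>0 Rt (\<lambda>l. \<alpha> l \<omega>)) = 1})"

end

theory Submission
  imports Defs "HOL-Real_Asymp.Real_Asymp"
begin

(* Write s_{i,j} for the variance sigma^2_{i,j} and |a_{i,j}|^2 for the
   power gain of link (i,j).  The event
   "I < R and |D(s)| = 1" is the disjoint union over j in {R1,R2} (k the other relay) of
      |a_{S,j}|^2 >= t,  |a_{S,k}|^2 < t,  |a_{S,D}|^2 + |a_{j,D}|^2 < t,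
   where t = ((1 + SNR s_{S,D})^(2r) - 1) / rho_0 is the gain threshold (gain_threshold).
   By independence its probability is F(t) = sum_j p_k(t) (1 - p_j(t)) q_j(t), where p_j(t)
   is the probability that relay j fails to decode and q_j(t) that the combined direct and
   relayed gain is below t. *)

lemma small_ball_prob_bounds:
  fixes X :: "'w \<Rightarrow> 'a::euclidean_space"
  assumes "prob_space M"
    and dist: "distributed M lborel X (\<lambda>z. ennreal (exp (- Q z) / K))"
    and K: "K > 0" and c: "c \<ge> 0" and Q0: "\<And>z. 0 \<le> Q z" and Qc: "\<And>z. Q z \<le> c * (norm z)^2"
    and \<rho>: "\<rho> > 0"
  shows "exp (- c * \<rho>^2) * (unit_ball_vol DIM('a) * \<rho>^DIM('a)) / K
           \<le> measure M {\<omega>\<in>space M. norm (X \<omega>) < \<rho>}"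
    and "measure M {\<omega>\<in>space M. norm (X \<omega>) < \<rho>} \<le> unit_ball_vol DIM('a) * \<rho>^DIM('a) / K"
proof -
  interpret prob_space M by fact
  let ?V = "unit_ball_vol DIM('a) * \<rho>^DIM('a)"
  have V: "?V > 0" using \<rho> by simp
  let ?ball = "indicator (ball (0::'a) \<rho>) :: 'a \<Rightarrow> ennreal"
  have prob: "ennreal (measure M {\<omega>\<in>space M. norm (X \<omega>) < \<rho>})
      = (\<integral>\<^sup>+z. ennreal (exp (- Q z) / K) * ?ball z \<partial>lborel)"
  proof -
    have "{\<omega>\<in>space M. norm (X \<omega>) < \<rho>} = X -` ball 0 \<rho> \<inter> space M" by auto
    then show ?thesis
      by (simp add: emeasure_eq_measure[symmetric] distributed_emeasure[OF dist])
  qed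
  have const: "(\<integral>\<^sup>+z. ennreal (b / K) * ?ball z \<partial>lborel) = ennreal (b * ?V / K)" if "b \<ge> 0" for b
    using \<rho> K V that by (simp add: nn_integral_cmult_indicator emeasure_ball ennreal_mult[symmetric])
  have "(\<integral>\<^sup>+z. ennreal (exp (- c * \<rho>^2) / K) * ?ball z \<partial>lborel)
      \<le> (\<integral>\<^sup>+z. ennreal (exp (- Q z) / K) * ?ball z \<partial>lborel)"
  proof (intro nn_integral_mono)
    fix z :: 'a
    have "Q z \<le> c * \<rho>^2" if "norm z < \<rho>"
      using Qc[of z] c that by (smt (verit) mult_left_mono norm_ge_zero power_mono)
    then show "ennreal (exp (- c * \<rho>^2) / K) * ?ball z \<le> ennreal (exp (- Q z) / K) * ?ball z"
      using K by (auto simp: indicator_def intro!: ennreal_leI divide_right_mono)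
  qed
  then show "exp (- c * \<rho>^2) * ?V / K \<le> measure M {\<omega>\<in>space M. norm (X \<omega>) < \<rho>}"
    unfolding prob[symmetric] const[OF exp_ge_zero] by (simp add: ennreal_le_iff)
  have "(\<integral>\<^sup>+z. ennreal (exp (- Q z) / K) * ?ball z \<partial>lborel)
      \<le> (\<integral>\<^sup>+z. ennreal (1 / K) * ?ball z \<partial>lborel)"
    using K Q0 by (intro nn_integral_mono) (auto simp: indicator_def intro!: ennreal_leI divide_right_mono)
  then have "ennreal (measure M {\<omega>\<in>space M. norm (X \<omega>) < \<rho>}) \<le> ennreal (?V / K)"
    unfolding prob const[OF zero_le_one] by simp
  then show "measure M {\<omega>\<in>space M. norm (X \<omega>) < \<rho>} \<le> ?V / K"
    using V K by (simp add: ennreal_le_iff)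
qed

lemma small_ball_prob_limit:
  fixes X :: "'w \<Rightarrow> 'a::euclidean_space"
  assumes "prob_space M"
    and dist: "distributed M lborel X (\<lambda>z. ennreal (exp (- Q z) / K))"
    and K: "K > 0" and c: "c \<ge> 0" and Q0: "\<And>z. 0 \<le> Q z" and Qc: "\<And>z. Q z \<le> c * (norm z)^2"
  shows "((\<lambda>\<theta>. measure M {\<omega>\<in>space M. norm (X \<omega>)^2 < \<theta>} / sqrt \<theta> ^ DIM('a))
           \<longlongrightarrow> unit_ball_vol DIM('a) / K) (at_right 0)"
proof (rule tendsto_sandwich[OF _ _ _ tendsto_const])
  let ?V = "unit_ball_vol DIM('a)"
  let ?ratio = "\<lambda>\<theta>. measure M {\<omega>\<in>space M. norm (X \<omega>)^2 < \<theta>} / sqrt \<theta> ^ DIM('a)"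
  have bounds: "exp (- c * \<theta>) * ?V / K \<le> ?ratio \<theta> \<and> ?ratio \<theta> \<le> ?V / K" if \<theta>: "\<theta> > 0" for \<theta>
  proof -
    have sq: "norm z < sqrt \<theta> \<longleftrightarrow> norm z ^ 2 < \<theta>" for z :: 'a
      using \<theta> by (metis norm_ge_zero real_less_rsqrt real_sqrt_less_iff real_sqrt_unique)
    have pos: "sqrt \<theta> ^ DIM('a) > 0" using \<theta> by simp
    show ?thesis
      using small_ball_prob_bounds[OF assms, of "sqrt \<theta>"] \<theta> pos K
      by (simp add: sq field_simps)
  qed
  show "\<forall>\<^sub>F \<theta> in at_right 0. exp (- c * \<theta>) * ?V / K \<le> ?ratio \<theta>"
    "\<forall>\<^sub>F \<theta> in at_right 0. ?ratio \<theta> \<le> ?V / K"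
    using eventually_at_right_less[of "0::real"] bounds by (auto elim!: eventually_mono)
  have "((\<lambda>\<theta>. exp (- c * \<theta>) * ?V / K) \<longlongrightarrow> exp (- c * 0) * ?V / K) (at_right 0)"
    using K by (intro tendsto_intros) auto
  then show "((\<lambda>\<theta>. exp (- c * \<theta>) * ?V / K) \<longlongrightarrow> ?V / K) (at_right 0)"
    by simp
qed

lemma cgauss_small_prob:
  fixes X :: "'w \<Rightarrow> complex"
  assumes "prob_space M" and dist: "distributed M lborel X (\<lambda>z. ennreal (cgauss_density v z))"
    and v: "v > 0"
  shows "((\<lambda>\<theta>. measure M {\<omega>\<in>space M. (cmod (X \<omega>))^2 < \<theta>} / \<theta>) \<longlongrightarrow> 1 / v) (at_right 0)"
proof -
  have "distributed M lborel X (\<lambda>z. ennreal (exp (- ((cmod z)^2 / v)) / (pi * v)))"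
    using dist by (simp add: cgauss_density_def)
  from small_ball_prob_limit[OF assms(1) this, of "1 / v"]
  have "((\<lambda>\<theta>. measure M {\<omega>\<in>space M. (cmod (X \<omega>))^2 < \<theta>} / sqrt \<theta> ^ 2)
           \<longlongrightarrow> unit_ball_vol 2 / (pi * v)) (at_right 0)"
    using v by simp
  moreover have "unit_ball_vol 2 / (pi * v) = 1 / v"
    using unit_ball_vol_even[of 1] by simp
  ultimately have "((\<lambda>\<theta>. measure M {\<omega>\<in>space M. (cmod (X \<omega>))^2 < \<theta>} / sqrt \<theta> ^ 2) \<longlongrightarrow> 1 / v) (at_right 0)"
    by simp
  then show ?thesis
  proof (rule Lim_transform_eventually)
    show "\<forall>\<^sub>F \<theta> in at_right 0. measure M {\<omega>\<in>space M. (cmod (X \<omega>))^2 < \<theta>} / sqrt \<theta> ^ 2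
        = measure M {\<omega>\<in>space M. (cmod (X \<omega>))^2 < \<theta>} / \<theta>"
      using eventually_at_right_less[of "0::real"] by eventually_elim simp
  qed
qed

(* For two independent such Gaussians the sum of their powers falls below t with
   probability ~ t^2 / (2 v w): the joint density is Gaussian on C x C = R^4. *)
lemma cgauss_pair_small_prob:
  fixes X Y :: "'w \<Rightarrow> complex"
  assumes "prob_space M" and indep: "prob_space.indep_var M lborel X lborel Y"
    and distX: "distributed M lborel X (\<lambda>z. ennreal (cgauss_density v z))"
    and distY: "distributed M lborel Y (\<lambda>z. ennreal (cgauss_density w z))"
    and v: "v > 0" and w: "w > 0"
  shows "((\<lambda>\<theta>. measure M {\<omega>\<in>space M. (cmod (X \<omega>))^2 + (cmod (Y \<omega>))^2 < \<theta>} / \<theta>^2)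
           \<longlongrightarrow> 1 / (2 * v * w)) (at_right 0)"
proof -
  interpret prob_space M by fact
  define Q where "Q = (\<lambda>z :: complex \<times> complex. (cmod (fst z))^2 / v + (cmod (snd z))^2 / w)"
  have "distributed M (lborel \<Otimes>\<^sub>M lborel) (\<lambda>\<omega>. (X \<omega>, Y \<omega>))
      (\<lambda>(x, y). ennreal (cgauss_density v x) * ennreal (cgauss_density w y))"
    by (rule distributed_joint_indep[OF _ _ distX distY indep]) (auto intro: sigma_finite_lborel)
  moreover have "(\<lambda>(x, y). ennreal (cgauss_density v x) * ennreal (cgauss_density w y))
      = (\<lambda>z. ennreal (exp (- Q z) / (pi * v * (pi * w))))"
    using v w by (auto simp: Q_def cgauss_density_def ennreal_mult[symmetric] exp_add[symmetric] field_simps)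
  ultimately have dist: "distributed M lborel (\<lambda>\<omega>. (X \<omega>, Y \<omega>)) (\<lambda>z. ennreal (exp (- Q z) / (pi * v * (pi * w))))"
    by (simp add: lborel_prod)
  have Qc: "Q z \<le> (1 / v + 1 / w) * (norm z)^2" for z
    using v w by (simp add: Q_def norm_prod_def field_simps)
  from small_ball_prob_limit[OF assms(1) dist _ _ _ Qc]
  have "((\<lambda>\<theta>. measure M {\<omega>\<in>space M. (cmod (X \<omega>))^2 + (cmod (Y \<omega>))^2 < \<theta>} / sqrt \<theta> ^ 4)
           \<longlongrightarrow> unit_ball_vol 4 / (pi * v * (pi * w))) (at_right 0)"
    using v w by (simp add: Q_def norm_prod_def)
  moreover have "unit_ball_vol 4 / (pi * v * (pi * w)) = 1 / (2 * v * w)"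
    using unit_ball_vol_even[of 2] v w by (simp add: field_simps power2_eq_square)
  ultimately have lim: "((\<lambda>\<theta>. measure M {\<omega>\<in>space M. (cmod (X \<omega>))^2 + (cmod (Y \<omega>))^2 < \<theta>} / sqrt \<theta> ^ 4)
           \<longlongrightarrow> 1 / (2 * v * w)) (at_right 0)"
    by simp
  show ?thesis
  proof (rule Lim_transform_eventually[OF lim])
    show "\<forall>\<^sub>F \<theta> in at_right 0. measure M {\<omega>\<in>space M. (cmod (X \<omega>))^2 + (cmod (Y \<omega>))^2 < \<theta>} / sqrt \<theta> ^ 4
        = measure M {\<omega>\<in>space M. (cmod (X \<omega>))^2 + (cmod (Y \<omega>))^2 < \<theta>} / \<theta>^2"
      using eventually_at_right_less[of "0::real"]
    proof eventually_elim
      case (elim \<theta>)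
      then have "sqrt \<theta> ^ 4 = \<theta>^2"
        by (metis power_mult real_sqrt_pow2 less_imp_le num_double numeral_times_numeral)
      then show ?case by simp
    qed
  qed
qed

lemma (in prob_space) indep_vars_pair:
  assumes ind: "indep_vars (\<lambda>_. N) X I" and ij: "i \<in> I" "j \<in> I" "i \<noteq> j"
  shows "indep_var N (X i) N (X j)"
proof -
  have "indep_var (PiM {i} (\<lambda>_. N)) (\<lambda>\<omega>. restrict (\<lambda>k. X k \<omega>) {i})
                  (PiM {j} (\<lambda>_. N)) (\<lambda>\<omega>. restrict (\<lambda>k. X k \<omega>) {j})"
    using ij by (intro indep_var_restrict[OF ind]) auto
  then have "indep_var N ((\<lambda>f. f i) \<circ> (\<lambda>\<omega>. restrict (\<lambda>k. X k \<omega>) {i}))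
                       N ((\<lambda>f. f j) \<circ> (\<lambda>\<omega>. restrict (\<lambda>k. X k \<omega>) {j}))"
    by (rule indep_var_compose) (auto intro: measurable_component_singleton)
  then show ?thesis by (simp add: o_def)
qed

lemma (in prob_space) indep_gain_events:
  fixes \<alpha> :: "'i \<Rightarrow> 'a \<Rightarrow> complex"
  assumes ind: "indep_vars (\<lambda>_. lborel) \<alpha> L"
    and mem: "a \<in> L" "b \<in> L" "c \<in> L" "d \<in> L" and dist: "distinct [a, b, c, d]"
    and sets: "A \<in> sets borel" "B \<in> sets borel" "C \<in> sets borel"
  shows "prob {\<omega>\<in>space M. (cmod (\<alpha> a \<omega>))^2 \<in> A \<and> (cmod (\<alpha> b \<omega>))^2 \<in> B
                            \<and> (cmod (\<alpha> c \<omega>))^2 + (cmod (\<alpha> d \<omega>))^2 \<in> C}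
       = prob {\<omega>\<in>space M. (cmod (\<alpha> a \<omega>))^2 \<in> A} * prob {\<omega>\<in>space M. (cmod (\<alpha> b \<omega>))^2 \<in> B}
         * prob {\<omega>\<in>space M. (cmod (\<alpha> c \<omega>))^2 + (cmod (\<alpha> d \<omega>))^2 \<in> C}"
proof -
  (* The blocks {a}, {b}, {c,d} are disjoint, so the restricted families are independent,
     and so are the real functions Y j of them. *)
  define K :: "nat \<Rightarrow> 'i set" where "K j = (if j = 0 then {a} else if j = 1 then {b} else {c, d})" for j
  define Y :: "nat \<Rightarrow> ('i \<Rightarrow> complex) \<Rightarrow> real" where
    "Y j f = (if j = 0 then (cmod (f a))^2 else if j = 1 then (cmod (f b))^2
              else (cmod (f c))^2 + (cmod (f d))^2)" for j f
  define E :: "nat \<Rightarrow> real set" where "E j = (if j = 0 then A else if j = 1 then B else C)" for j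
  let ?J = "{0, 1, 2 :: nat}"
  have "indep_vars (\<lambda>j. PiM (K j) (\<lambda>_. lborel)) (\<lambda>j \<omega>. restrict (\<lambda>i. \<alpha> i \<omega>) (K j)) ?J"
    using mem dist by (intro indep_vars_restrict[OF ind]) (auto simp: K_def disjoint_family_on_def)
  moreover have "Y j \<in> borel_measurable (PiM (K j) (\<lambda>_. lborel))" if "j \<in> ?J" for j
    using that unfolding Y_def[abs_def] K_def by (auto; measurable)
  ultimately have "indep_vars (\<lambda>_. borel) (\<lambda>j \<omega>. Y j (restrict (\<lambda>i. \<alpha> i \<omega>) (K j))) ?J"
    by (rule indep_vars_compose2)
  from indep_varsD_finite[OF this, of E]
  have "prob (\<Inter>j\<in>?J. (\<lambda>\<omega>. Y j (restrict (\<lambda>i. \<alpha> i \<omega>) (K j))) -` E j \<inter> space M)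
      = (\<Prod>j\<in>?J. prob ((\<lambda>\<omega>. Y j (restrict (\<lambda>i. \<alpha> i \<omega>) (K j))) -` E j \<inter> space M))"
    using sets by (simp add: E_def)
  then show ?thesis
    by (simp add: K_def Y_def E_def Collect_conj_eq vimage_def Int_ac mult.assoc)
qed

(* The power threshold below which a link of rate R = r log(1 + SNR s) fails, when the
   transmit power per phase is rho_0 = 2/3 SNR. *)
definition gain_threshold :: "real \<Rightarrow> real \<Rightarrow> real \<Rightarrow> real" where
  "gain_threshold \<sigma> r snr = ((1 + snr * \<sigma>) powr (2 * r) - 1) / (2/3 * snr)"

lemma decoding_rate_iff:
  fixes \<rho>0 B r x :: real
  assumes \<rho>0: "\<rho>0 > 0" and B: "B > 1" and x: "x \<ge> 0"
  shows "r * ln B \<le> ln (1 + \<rho>0 * x) / 2 \<longleftrightarrow> (B powr (2 * r) - 1) / \<rho>0 \<le> x"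
proof -
  have "ln (B powr (2 * r)) = 2 * (r * ln B)"
    using B by (simp add: ln_powr)
  then have "r * ln B \<le> ln (1 + \<rho>0 * x) / 2 \<longleftrightarrow> ln (B powr (2 * r)) \<le> ln (1 + \<rho>0 * x)"
    by linarith
  also have "\<dots> \<longleftrightarrow> B powr (2 * r) \<le> 1 + \<rho>0 * x"
    using \<rho>0 B x by (intro ln_le_cancel_iff) (auto intro: add_pos_nonneg)
  also have "\<dots> \<longleftrightarrow> (B powr (2 * r) - 1) / \<rho>0 \<le> x"
    using \<rho>0 by (simp add: field_simps)
  finally show ?thesis .
qed

(* With a single retransmitting relay the delay-diversity mutual information does not depend
   on the frequency and reduces to maximal-ratio combining of the two links. *)
lemma I_RTDA_single_relay:
  assumes "Bw > 0"
  shows "I_RTDA Bw \<tau> \<rho>0 a {j} = ln (1 + \<rho>0 * ((cmod (a (S,D)))\<^sup>2 + (cmod (a (j,D)))\<^sup>2)) / 2"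
  using assms by (simp add: I_RTDA_def norm_mult algebra_simps)

lemma single_relay_outage_iff:
  fixes a :: "node \<times> node \<Rightarrow> complex" and r B \<rho>0 Bw :: real
  assumes Bw: "Bw > 0" and \<rho>0: "\<rho>0 > 0" and B: "B > 1"
  defines "\<theta> \<equiv> (B powr (2 * r) - 1) / \<rho>0"
  shows "(I_RTDA Bw \<tau> \<rho>0 a (decoding_set \<rho>0 (r * ln B) a) < r * ln B
          \<and> card (decoding_set \<rho>0 (r * ln B) a) = 1) \<longleftrightarrow>
     ((cmod (a (S,R1)))\<^sup>2 \<ge> \<theta> \<and> (cmod (a (S,R2)))\<^sup>2 < \<theta> \<and> (cmod (a (S,D)))\<^sup>2 + (cmod (a (R1,D)))\<^sup>2 < \<theta>)
   \<or> ((cmod (a (S,R2)))\<^sup>2 \<ge> \<theta> \<and> (cmod (a (S,R1)))\<^sup>2 < \<theta> \<and> (cmod (a (S,D)))\<^sup>2 + (cmod (a (R2,D)))\<^sup>2 < \<theta>)"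
proof -
  have "decoding_set \<rho>0 (r * ln B) a = {k \<in> {R1, R2}. (cmod (a (S,k)))\<^sup>2 \<ge> \<theta>}"
    unfolding decoding_set_def \<theta>_def using decoding_rate_iff[OF \<rho>0 B] by auto
  then have decoding: "decoding_set \<rho>0 (r * ln B) a
      = (if (cmod (a (S,R1)))\<^sup>2 \<ge> \<theta> then {R1} else {}) \<union> (if (cmod (a (S,R2)))\<^sup>2 \<ge> \<theta> then {R2} else {})"
    by auto
  have rate: "I_RTDA Bw \<tau> \<rho>0 a {j} < r * ln B \<longleftrightarrow> (cmod (a (S,D)))\<^sup>2 + (cmod (a (j,D)))\<^sup>2 < \<theta>" for j
    unfolding I_RTDA_single_relay[OF Bw] \<theta>_def
    using decoding_rate_iff[OF \<rho>0 B, of "(cmod (a (S,D)))\<^sup>2 + (cmod (a (j,D)))\<^sup>2" r] by auto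
  consider "(cmod (a (S,R1)))\<^sup>2 \<ge> \<theta>" "(cmod (a (S,R2)))\<^sup>2 \<ge> \<theta>"
    | "(cmod (a (S,R1)))\<^sup>2 \<ge> \<theta>" "(cmod (a (S,R2)))\<^sup>2 < \<theta>"
    | "(cmod (a (S,R1)))\<^sup>2 < \<theta>" "(cmod (a (S,R2)))\<^sup>2 \<ge> \<theta>"
    | "(cmod (a (S,R1)))\<^sup>2 < \<theta>" "(cmod (a (S,R2)))\<^sup>2 < \<theta>"
    by linarith
  then show ?thesis
    by cases (simp_all add: decoding rate)
qed

locale relay_channel = prob_space M for M :: "'w measure" +
  fixes \<alpha> :: "node \<times> node \<Rightarrow> 'w \<Rightarrow> complex" and \<sigma>2 :: "node \<times> node \<Rightarrow> real"
  assumes variance_pos: "\<forall>l\<in>links. \<sigma>2 l > 0"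
    and indep_gains: "indep_vars (\<lambda>_. lborel) \<alpha> links"
    and gaussian_gains: "\<forall>l\<in>links. distributed M lborel (\<alpha> l) (\<lambda>z. ennreal (cgauss_density (\<sigma>2 l) z))"
begin

lemma relay_links: "(S,R1) \<in> links" "(S,R2) \<in> links" "(S,D) \<in> links" "(R1,D) \<in> links" "(R2,D) \<in> links"
  by (auto simp: links_def)

lemma gain_measurable: "l \<in> links \<Longrightarrow> \<alpha> l \<in> borel_measurable M"
  using distributed_measurable[OF gaussian_gains[rule_format]] by simp

definition relay_fail :: "node \<Rightarrow> real \<Rightarrow> real" where
  "relay_fail j \<theta> = prob {\<omega>\<in>space M. (cmod (\<alpha> (S,j) \<omega>))\<^sup>2 < \<theta>}"

definition combined_fail :: "node \<Rightarrow> real \<Rightarrow> real" where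
  "combined_fail j \<theta> = prob {\<omega>\<in>space M. (cmod (\<alpha> (S,D) \<omega>))\<^sup>2 + (cmod (\<alpha> (j,D) \<omega>))\<^sup>2 < \<theta>}"

lemma relay_fail_rate:
  assumes "(S,j) \<in> links"
  shows "((\<lambda>\<theta>. relay_fail j \<theta> / \<theta>) \<longlongrightarrow> 1 / \<sigma>2 (S,j)) (at_right 0)"
  unfolding relay_fail_def
  using assms gaussian_gains variance_pos by (intro cgauss_small_prob[OF prob_space_axioms]) simp_all

lemma combined_fail_rate:
  assumes "j \<in> {R1, R2}"
  shows "((\<lambda>\<theta>. combined_fail j \<theta> / \<theta>^2) \<longlongrightarrow> 1 / (2 * \<sigma>2 (S,D) * \<sigma>2 (j,D))) (at_right 0)"
proof -
  have links: "(S,D) \<in> links" "(j,D) \<in> links" "(S,D) \<noteq> (j,D)"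
    using assms by (auto simp: links_def)
  show ?thesis
    unfolding combined_fail_def using links gaussian_gains variance_pos
    by (intro cgauss_pair_small_prob[OF prob_space_axioms indep_vars_pair[OF indep_gains]]) simp_all
qed

lemma single_relay_event_prob:
  assumes "j \<in> {R1, R2}" "k \<in> {R1, R2}" "j \<noteq> k"
  shows "prob {\<omega>\<in>space M. \<theta> \<le> (cmod (\<alpha> (S,j) \<omega>))\<^sup>2 \<and> (cmod (\<alpha> (S,k) \<omega>))\<^sup>2 < \<theta>
                          \<and> (cmod (\<alpha> (S,D) \<omega>))\<^sup>2 + (cmod (\<alpha> (j,D) \<omega>))\<^sup>2 < \<theta>}
       = relay_fail k \<theta> * (1 - relay_fail j \<theta>) * combined_fail j \<theta>"
proof -
  have links: "(S,k) \<in> links" "(S,j) \<in> links" "(S,D) \<in> links" "(j,D) \<in> links"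
    and distinct: "distinct [(S,k), (S,j), (S,D), (j,D)]"
    using assms by (auto simp: links_def)
  have "prob {\<omega>\<in>space M. (cmod (\<alpha> (S,j) \<omega>))\<^sup>2 \<in> {\<theta>..}} = 1 - relay_fail j \<theta>"
  proof -
    have "{\<omega>\<in>space M. (cmod (\<alpha> (S,j) \<omega>))\<^sup>2 \<in> {\<theta>..}}
        = space M - {\<omega>\<in>space M. (cmod (\<alpha> (S,j) \<omega>))\<^sup>2 < \<theta>}"
      by auto
    moreover have "{\<omega>\<in>space M. (cmod (\<alpha> (S,j) \<omega>))\<^sup>2 < \<theta>} \<in> events"
      using gain_measurable[OF links(2)] by measurable
    ultimately show ?thesis
      by (simp add: prob_compl relay_fail_def)
  qed
  moreover have "{\<omega>\<in>space M. \<theta> \<le> (cmod (\<alpha> (S,j) \<omega>))\<^sup>2 \<and> (cmod (\<alpha> (S,k) \<omega>))\<^sup>2 < \<theta>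
                          \<and> (cmod (\<alpha> (S,D) \<omega>))\<^sup>2 + (cmod (\<alpha> (j,D) \<omega>))\<^sup>2 < \<theta>}
      = {\<omega>\<in>space M. (cmod (\<alpha> (S,k) \<omega>))\<^sup>2 \<in> {..<\<theta>} \<and> (cmod (\<alpha> (S,j) \<omega>))\<^sup>2 \<in> {\<theta>..}
                   \<and> (cmod (\<alpha> (S,D) \<omega>))\<^sup>2 + (cmod (\<alpha> (j,D) \<omega>))\<^sup>2 \<in> {..<\<theta>}}"
    by auto
  ultimately show ?thesis
    using indep_gain_events[OF indep_gains links distinct, of "{..<\<theta>}" "{\<theta>..}" "{..<\<theta>}"]
    by (simp add: relay_fail_def combined_fail_def)
qed

lemma outage_one_eq:
  fixes Bw r snr :: real and \<tau> :: "node \<Rightarrow> real"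
  assumes Bw: "Bw > 0" and snr: "snr > 0"
  defines "\<theta> \<equiv> gain_threshold (\<sigma>2 (S,D)) r snr"
  shows "outage_one M \<alpha> \<sigma>2 Bw \<tau> r snr
       = relay_fail R2 \<theta> * (1 - relay_fail R1 \<theta>) * combined_fail R1 \<theta>
         + relay_fail R1 \<theta> * (1 - relay_fail R2 \<theta>) * combined_fail R2 \<theta>"
proof -
  define E where "E j k = {\<omega>\<in>space M. \<theta> \<le> (cmod (\<alpha> (S,j) \<omega>))\<^sup>2 \<and> (cmod (\<alpha> (S,k) \<omega>))\<^sup>2 < \<theta>
                          \<and> (cmod (\<alpha> (S,D) \<omega>))\<^sup>2 + (cmod (\<alpha> (j,D) \<omega>))\<^sup>2 < \<theta>}" for j k
  have B: "1 + snr * \<sigma>2 (S,D) > 1" and \<rho>0: "2/3 * snr > 0"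
    using snr variance_pos relay_links by auto
  have "outage_one M \<alpha> \<sigma>2 Bw \<tau> r snr = prob (E R1 R2 \<union> E R2 R1)"
    unfolding outage_one_def Let_def E_def \<theta>_def gain_threshold_def
    using single_relay_outage_iff[OF Bw \<rho>0 B, of \<tau> "\<lambda>l. \<alpha> l _" r]
    by (intro arg_cong[where f=prob]) auto
  also have "\<dots> = prob (E R1 R2) + prob (E R2 R1)"
    using gain_measurable relay_links unfolding E_def
    by (intro finite_measure_Union) (measurable, auto)
  also have "\<dots> = relay_fail R2 \<theta> * (1 - relay_fail R1 \<theta>) * combined_fail R1 \<theta>
         + relay_fail R1 \<theta> * (1 - relay_fail R2 \<theta>) * combined_fail R2 \<theta>"
    unfolding E_def by (simp add: single_relay_event_prob)
  finally show ?thesis .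
qed

end

lemma cubic_rate:
  fixes p1 p2 q1 q2 :: "real \<Rightarrow> real"
  assumes p1: "((\<lambda>\<theta>. p1 \<theta> / \<theta>) \<longlongrightarrow> a1) (at_right 0)"
    and p2: "((\<lambda>\<theta>. p2 \<theta> / \<theta>) \<longlongrightarrow> a2) (at_right 0)"
    and q1: "((\<lambda>\<theta>. q1 \<theta> / \<theta>^2) \<longlongrightarrow> b1) (at_right 0)"
    and q2: "((\<lambda>\<theta>. q2 \<theta> / \<theta>^2) \<longlongrightarrow> b2) (at_right 0)"
  shows "((\<lambda>\<theta>. (p2 \<theta> * (1 - p1 \<theta>) * q1 \<theta> + p1 \<theta> * (1 - p2 \<theta>) * q2 \<theta>) / \<theta>^3)
           \<longlongrightarrow> a2 * b1 + a1 * b2) (at_right 0)"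
proof -
  have vanish: "(p \<longlongrightarrow> 0) (at_right 0)" if "((\<lambda>\<theta>. p \<theta> / \<theta>) \<longlongrightarrow> a) (at_right 0)" for p :: "real \<Rightarrow> real" and a
  proof (rule Lim_transform_eventually)
    show "((\<lambda>\<theta>. p \<theta> / \<theta> * \<theta>) \<longlongrightarrow> 0) (at_right 0)"
      using tendsto_mult[OF that tendsto_ident_at[of 0 "{0<..}"]] by simp
    show "\<forall>\<^sub>F \<theta> in at_right 0. p \<theta> / \<theta> * \<theta> = p \<theta>"
      using eventually_at_right_less[of "0::real"] by eventually_elim simp
  qed
  have "((\<lambda>\<theta>. p2 \<theta> / \<theta> * (1 - p1 \<theta>) * (q1 \<theta> / \<theta>^2) + p1 \<theta> / \<theta> * (1 - p2 \<theta>) * (q2 \<theta> / \<theta>^2))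
           \<longlongrightarrow> a2 * (1 - 0) * b1 + a1 * (1 - 0) * b2) (at_right 0)"
    by (intro tendsto_intros p1 p2 q1 q2 vanish[OF p1] vanish[OF p2])
  then have "((\<lambda>\<theta>. p2 \<theta> / \<theta> * (1 - p1 \<theta>) * (q1 \<theta> / \<theta>^2) + p1 \<theta> / \<theta> * (1 - p2 \<theta>) * (q2 \<theta> / \<theta>^2))
           \<longlongrightarrow> a2 * b1 + a1 * b2) (at_right 0)"
    by simp
  then show ?thesis
  proof (rule Lim_transform_eventually)
    show "\<forall>\<^sub>F \<theta> in at_right 0. p2 \<theta> / \<theta> * (1 - p1 \<theta>) * (q1 \<theta> / \<theta>^2) + p1 \<theta> / \<theta> * (1 - p2 \<theta>) * (q2 \<theta> / \<theta>^2)
        = (p2 \<theta> * (1 - p1 \<theta>) * q1 \<theta> + p1 \<theta> * (1 - p2 \<theta>) * q2 \<theta>) / \<theta>^3"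
      using eventually_at_right_less[of "0::real"]
      by eventually_elim (simp add: field_simps power2_eq_square power3_eq_cube)
  qed
qed

lemma gain_threshold_to_0:
  assumes "\<sigma> > 0" "0 < r" "r < 1/2"
  shows "filterlim (gain_threshold \<sigma> r) (at_right 0) at_top"
  unfolding gain_threshold_def using assms by real_asymp

lemma gain_threshold_equiv:
  assumes "\<sigma> > 0" "0 < r" "r < 1/2"
  shows "gain_threshold \<sigma> r \<sim>[at_top] (\<lambda>snr. 3/2 * \<sigma> powr (2*r) * snr powr (2*r - 1))"
  unfolding gain_threshold_def using assms by real_asymp

(* A function with cubic behaviour at 0, evaluated at the threshold, decays like
   (s SNR)^(-3(1-2r)): this is where the diversity order 3(1-2r) comes from. *)
lemma cube_rate_transfer:
  fixes F :: "real \<Rightarrow> real"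
  assumes F: "((\<lambda>\<theta>. F \<theta> / \<theta>^3) \<longlongrightarrow> L) (at_right 0)" and L: "L > 0"
    and \<sigma>: "\<sigma> > 0" and r: "0 < r" "r < 1/2"
  shows "(\<lambda>snr. F (gain_threshold \<sigma> r snr))
           \<sim>[at_top] (\<lambda>snr. 27/8 * \<sigma>^3 * L * (\<sigma> * snr) powr (- 3 * (1 - 2 * r)))"
proof -
  have "F \<sim>[at_right 0] (\<lambda>\<theta>. L * \<theta>^3)"
    using asymp_equivI'_const[OF F] L by simp
  then have "(\<lambda>snr. F (gain_threshold \<sigma> r snr)) \<sim>[at_top] (\<lambda>snr. L * gain_threshold \<sigma> r snr ^ 3)"
    using gain_threshold_to_0[OF \<sigma> r] by (rule asymp_equiv_compose')
  also have "\<dots> \<sim>[at_top] (\<lambda>snr. L * (3/2 * \<sigma> powr (2*r) * snr powr (2*r - 1)) ^ 3)"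
    by (intro asymp_equiv_intros gain_threshold_equiv[OF \<sigma> r])
  also have "\<dots> \<sim>[at_top] (\<lambda>snr. 27/8 * \<sigma>^3 * L * (\<sigma> * snr) powr (- 3 * (1 - 2 * r)))"
  proof (rule asymp_equiv_refl_ev)
    show "\<forall>\<^sub>F snr in at_top. L * (3/2 * \<sigma> powr (2*r) * snr powr (2*r - 1)) ^ 3
            = 27/8 * \<sigma>^3 * L * (\<sigma> * snr) powr (- 3 * (1 - 2 * r))"
      using eventually_gt_at_top[of 0]
    proof eventually_elim
      case (elim snr)
      have \<sigma>_cube: "(\<sigma> powr (2*r))^3 = \<sigma>^3 * \<sigma> powr (- 3 * (1 - 2 * r))"
      proof -
        have "(\<sigma> powr (2*r))^3 = \<sigma> powr (3 + - 3 * (1 - 2 * r))"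
          using \<sigma> by (simp add: powr_power algebra_simps)
        also have "\<dots> = \<sigma>^3 * \<sigma> powr (- 3 * (1 - 2 * r))"
          using \<sigma> by (subst powr_add) simp
        finally show ?thesis .
      qed
      have snr_cube: "(snr powr (2*r - 1))^3 = snr powr (- 3 * (1 - 2 * r))"
        using elim by (simp add: powr_power algebra_simps)
      have "L * (3/2 * \<sigma> powr (2*r) * snr powr (2*r - 1)) ^ 3
          = 27/8 * L * (\<sigma> powr (2*r))^3 * (snr powr (2*r - 1))^3"
        by (simp add: power_mult_distrib power_divide)
      also have "\<dots> = 27/8 * \<sigma>^3 * L * (\<sigma> * snr) powr (- 3 * (1 - 2 * r))"
        unfolding \<sigma>_cube snr_cube by (simp add: powr_mult)
      finally show ?case .
    qed
  qed
  finally show ?thesis .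
qed

theorem lemma4:
  fixes M :: "'w measure" and \<alpha> :: "node \<times> node \<Rightarrow> 'w \<Rightarrow> complex"
    and \<sigma>2 :: "node \<times> node \<Rightarrow> real" and Bw :: real and \<tau> :: "node \<Rightarrow> real" and r :: real
  assumes "prob_space M"
    and "\<forall>l\<in>links. \<sigma>2 l > 0"
    and "prob_space.indep_vars M (\<lambda>_. lborel) \<alpha> links"
    and "\<forall>l\<in>links. distributed M lborel (\<alpha> l) (\<lambda>z. ennreal (cgauss_density (\<sigma>2 l) z))"
    and "Bw > 0"
    and "0 < r" and "r < 1/2"
  shows "\<exists>C>0. (\<lambda>snr. outage_one M \<alpha> \<sigma>2 Bw \<tau> r snr)
            \<sim>[at_top] (\<lambda>snr. C * (\<sigma>2 (S,D) * snr) powr (- 3 * (1 - 2 * r)))"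
proof -
  interpret relay_channel M \<alpha> \<sigma>2
    using assms(1-4) by (simp add: relay_channel_def relay_channel_axioms_def)
  let ?F = "\<lambda>\<theta>. relay_fail R2 \<theta> * (1 - relay_fail R1 \<theta>) * combined_fail R1 \<theta>
              + relay_fail R1 \<theta> * (1 - relay_fail R2 \<theta>) * combined_fail R2 \<theta>"
  define L where "L = 1 / \<sigma>2 (S,R2) * (1 / (2 * \<sigma>2 (S,D) * \<sigma>2 (R1,D)))
                    + 1 / \<sigma>2 (S,R1) * (1 / (2 * \<sigma>2 (S,D) * \<sigma>2 (R2,D)))"
  define C where "C = 27/8 * \<sigma>2 (S,D)^3 * L"
  have pos: "\<sigma>2 (S,R1) > 0" "\<sigma>2 (S,R2) > 0" "\<sigma>2 (S,D) > 0" "\<sigma>2 (R1,D) > 0" "\<sigma>2 (R2,D) > 0"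
    using variance_pos relay_links by auto
  then have L: "L > 0"
    unfolding L_def by (intro add_pos_pos) simp_all
  have "((\<lambda>\<theta>. ?F \<theta> / \<theta>^3) \<longlongrightarrow> L) (at_right 0)"
    unfolding L_def by (intro cubic_rate relay_fail_rate combined_fail_rate relay_links) simp_all
  then have "(\<lambda>snr. ?F (gain_threshold (\<sigma>2 (S,D)) r snr))
               \<sim>[at_top] (\<lambda>snr. C * (\<sigma>2 (S,D) * snr) powr (- 3 * (1 - 2 * r)))"
    unfolding C_def using L pos(3) assms(6,7) by (rule cube_rate_transfer)
  moreover have "\<forall>\<^sub>F snr in at_top. ?F (gain_threshold (\<sigma>2 (S,D)) r snr) = outage_one M \<alpha> \<sigma>2 Bw \<tau> r snr"
    using eventually_gt_at_top[of 0] by eventually_elim (simp add: outage_one_eq[OF assms(5)])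
  ultimately have "(\<lambda>snr. outage_one M \<alpha> \<sigma>2 Bw \<tau> r snr)
                     \<sim>[at_top] (\<lambda>snr. C * (\<sigma>2 (S,D) * snr) powr (- 3 * (1 - 2 * r)))"
    by (rule asymp_equiv_transfer) simp
  moreover have "C > 0"
    using L pos(3) by (simp add: C_def)
  ultimately show ?thesis by blast
qed

end
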